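(* Let $R$ be a finite commutative ring with identity such that every residue field $R/\mathfrak{m}$, $\mathfrak{m}\in\mathrm{Max}(R)$, has odd characteristic. Then $$\chi\big(\mathrm{Reg}(\Gamma(R))\big)=\omega\big(\mathrm{Reg}(\Gamma(R))\big)=2^{|\mathrm{Max}(R)|}.$$
   Context: $Z(R)$ is the set of zero-divisors of $R$ (including $0$), $\mathrm{Reg}(R)=R\setminus Z(R)$ the set of regular elements, and $\mathrm{Max}(R)$ the set of maximal ideals. The total graph $T(\Gamma(R))$ is the simple graph with vertex set $R$ in which distinct $x,y$ are adjacent iff $x+y\in Z(R)$; $\mathrm{Reg}(\Gamma(R))$ is its induced subgraph on $\mathrm{Reg}(R)$. $\chi$ and $\omega$ denote chromatic and clique number. *)

theory Defs
  imports "HOL-Algebra.Algebra"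
begin

definition ring_char :: "('a, 'b) ring_scheme \<Rightarrow> nat" where
  "ring_char R = (if \<exists>n::nat. n > 0 \<and> [n] \<cdot>\<^bsub>R\<^esub> \<one>\<^bsub>R\<^esub> = \<zero>\<^bsub>R\<^esub>
                  then (LEAST n::nat. n > 0 \<and> [n] \<cdot>\<^bsub>R\<^esub> \<one>\<^bsub>R\<^esub> = \<zero>\<^bsub>R\<^esub>) else 0)"

definition zero_divisors :: "('a, 'b) ring_scheme \<Rightarrow> 'a set" where
  "zero_divisors R = {x \<in> carrier R. \<exists>y \<in> carrier R. y \<noteq> \<zero>\<^bsub>R\<^esub> \<and> x \<otimes>\<^bsub>R\<^esub> y = \<zero>\<^bsub>R\<^esub>}"

definition regular_elems :: "('a, 'b) ring_scheme \<Rightarrow> 'a set" where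
  "regular_elems R = carrier R - zero_divisors R"

definition max_ideals :: "('a, 'b) ring_scheme \<Rightarrow> 'a set set" where
  "max_ideals R = {I. maximalideal I R}"

text \<open>Adjacency of the total graph T(Gamma(R)).\<close>
definition total_adj :: "('a, 'b) ring_scheme \<Rightarrow> 'a \<Rightarrow> 'a \<Rightarrow> bool" where
  "total_adj R x y \<longleftrightarrow> x \<noteq> y \<and> x \<oplus>\<^bsub>R\<^esub> y \<in> zero_divisors R"

definition is_clique :: "'v set \<Rightarrow> ('v \<Rightarrow> 'v \<Rightarrow> bool) \<Rightarrow> 'v set \<Rightarrow> bool" where
  "is_clique V E C \<longleftrightarrow> C \<subseteq> V \<and> (\<forall>x\<in>C. \<forall>y\<in>C. x \<noteq> y \<longrightarrow> E x y)"

definition clique_number :: "'v set \<Rightarrow> ('v \<Rightarrow> 'v \<Rightarrow> bool) \<Rightarrow> nat" where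
  "clique_number V E = Max {card C | C. is_clique V E C \<and> finite C}"

definition proper_colouring :: "'v set \<Rightarrow> ('v \<Rightarrow> 'v \<Rightarrow> bool) \<Rightarrow> nat \<Rightarrow> ('v \<Rightarrow> nat) \<Rightarrow> bool" where
  "proper_colouring V E k f \<longleftrightarrow> f ` V \<subseteq> {..<k} \<and> (\<forall>x\<in>V. \<forall>y\<in>V. x \<noteq> y \<and> E x y \<longrightarrow> f x \<noteq> f y)"

definition chromatic_number :: "'v set \<Rightarrow> ('v \<Rightarrow> 'v \<Rightarrow> bool) \<Rightarrow> nat" where
  "chromatic_number V E = (LEAST k. \<exists>f. proper_colouring V E k f)"

end

theory Submission
  imports Defs "HOL-Algebra.Chinese_Remainder"
begin

text \<open>In a finite commutative ring the regular elements are the units and the zero-divisors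
  are the union of the maximal ideals, so two distinct units are adjacent iff their sum lies in
  some maximal ideal \<open>m\<close>. Odd residue characteristic means \<open>2 \<notin> m\<close>; as \<open>m\<close> is prime, the
  classes \<open>x + m\<close> and \<open>-x + m\<close> of a unit then differ, and choosing one class of each such pair
  gives a sign \<open>s\<^sub>m\<close> with \<open>s\<^sub>m x \<noteq> s\<^sub>m y\<close> whenever \<open>x + y \<in> m\<close>. Colouring a unit by its sign
  vector \<open>(s\<^sub>m x)\<^sub>m\<close> is proper and uses \<open>2\<^bsup>|Max(R)|\<^esup>\<close> colours. Conversely, by the Chinese
  remainder theorem each sign vector \<open>\<epsilon>\<close> is realised by an element \<open>x\<^sub>\<epsilon>\<close> congruent to \<open>\<plusminus>1\<close>
  modulo each \<open>m\<close> according to \<open>\<epsilon>\<^sub>m\<close>; these are units and form a clique of the same size.\<close>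

lemma (in ring) ring_char_eq_two:
  assumes "\<one> \<noteq> \<zero>" and "\<one> \<oplus> \<one> = \<zero>"
  shows "ring_char R = 2"
proof -
  have one: "[(1::nat)] \<cdot> \<one> = \<one>" and two: "[(2::nat)] \<cdot> \<one> = \<one> \<oplus> \<one>"
    by (simp_all add: numeral_2_eq_2 add.nat_pow_Suc)
  have "(LEAST n::nat. n > 0 \<and> [n] \<cdot> \<one> = \<zero>) = 2"
  proof (rule Least_equality)
    fix n :: nat assume "0 < n \<and> [n] \<cdot> \<one> = \<zero>"
    with one assms(1) show "2 \<le> n" by (cases "n = 1") auto
  qed (use two assms(2) in auto)
  then show ?thesis
    unfolding ring_char_def using two assms(2) by (metis zero_less_numeral)
qed

lemma (in ideal) ring_char_Quot_eq_two:
  assumes "carrier R \<noteq> I" and "\<one> \<oplus> \<one> \<in> I"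
  shows "ring_char (R Quot I) = 2"
proof -
  interpret Q: ring "R Quot I" by (rule quotient_is_ring)
  have "\<one>\<^bsub>R Quot I\<^esub> \<noteq> \<zero>\<^bsub>R Quot I\<^esub>"
    using assms(1) one_imp_carrier rcos_const_imp_mem by (auto simp: FactRing_def)
  moreover have "\<one>\<^bsub>R Quot I\<^esub> \<oplus>\<^bsub>R Quot I\<^esub> \<one>\<^bsub>R Quot I\<^esub> = \<zero>\<^bsub>R Quot I\<^esub>"
    using assms(2) by (simp add: FactRing_def a_rcos_sum a_rcos_const)
  ultimately show ?thesis by (rule Q.ring_char_eq_two)
qed

lemma (in ideal) Units_notin:
  assumes "carrier R \<noteq> I" and "u \<in> Units R"
  shows "u \<notin> I"
proof
  assume "u \<in> I"
  then have "\<one> \<in> I" using assms(2) I_l_closed[of u "inv u"] by (simp add: Units_l_inv)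
  then show False using assms one_imp_carrier by simp
qed

lemma (in ideal) congruent_Units_notin:
  assumes "carrier R \<noteq> I" and "a \<in> carrier R" "u \<in> Units R" "a \<ominus> u \<in> I"
  shows "a \<notin> I"
proof
  assume "a \<in> I"
  have "u = a \<ominus> (a \<ominus> u)" using assms(2) Units_closed[OF assms(3)] by algebra
  also have "\<dots> \<in> I"
    using additive_subgroup.a_closed[OF additive_subgroup_axioms \<open>a \<in> I\<close>
        additive_subgroup.a_inv_closed[OF additive_subgroup_axioms assms(4)]]
    by (simp add: a_minus_def)
  finally show False using Units_notin[OF assms(1,3)] by simp
qed

lemma (in cring) Units_disjoint_zero_divisors: "Units R \<inter> zero_divisors R = {}"
proof -
  have "y = \<zero>" if u: "u \<in> Units R" and y: "y \<in> carrier R" "u \<otimes> y = \<zero>" for u y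
  proof -
    have "y = inv u \<otimes> (u \<otimes> y)" using u y
      by (metis Units_closed Units_inv_closed Units_l_inv l_one m_assoc)
    then show ?thesis using u y by simp
  qed
  then show ?thesis unfolding zero_divisors_def by blast
qed

lemma (in cring) finite_nonunit_zero_divisor:
  assumes fin: "finite (carrier R)" and z: "z \<in> carrier R" "z \<notin> Units R"
  shows "z \<in> zero_divisors R"
proof (cases "inj_on (\<lambda>a. z \<otimes> a) (carrier R)")
  case True
  have "(\<lambda>a. z \<otimes> a) ` carrier R = carrier R"
    by (rule endo_inj_surj[OF fin _ True]) (use z in auto)
  then obtain a where "a \<in> carrier R" "z \<otimes> a = \<one>"
    by (metis imageE one_closed)
  then have "z \<in> Units R" using z unfolding Units_def by (auto simp: m_comm)
  with z show ?thesis by simp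
next
  case False
  then obtain a b where ab: "a \<in> carrier R" "b \<in> carrier R" "a \<noteq> b" "z \<otimes> a = z \<otimes> b"
    unfolding inj_on_def by auto
  then have "z \<otimes> (a \<ominus> b) = \<zero>" using z by (simp add: r_distr minus_eq r_minus r_neg)
  moreover have "a \<ominus> b \<noteq> \<zero>" using ab by (simp add: r_right_minus_eq)
  ultimately show ?thesis using ab z unfolding zero_divisors_def
    by (intro CollectI conjI bexI[of _ "a \<ominus> b"]) auto
qed

lemma (in cring) finite_nonunit_in_maximalideal:
  assumes fin: "finite (carrier R)" and z: "z \<in> carrier R" "z \<notin> Units R"
  shows "\<exists>m. maximalideal m R \<and> z \<in> m"
proof -
  define P where "P = {J. ideal J R \<and> \<one> \<notin> J}"
  have "PIdl z \<in> P"
  proof -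
    have "\<one> \<notin> PIdl z"
      using z unfolding cgenideal_def Units_def by (auto simp: m_comm)
    then show ?thesis unfolding P_def using z cgenideal_ideal by auto
  qed
  moreover have "finite P"
    using fin by (rule rev_finite_subset[OF finite_Pow_iff[THEN iffD2]])
      (auto simp: P_def dest: ideal.Icarr)
  ultimately obtain J where J: "J \<in> P" "PIdl z \<subseteq> J" and Jmax: "\<forall>J'\<in>P. J \<subseteq> J' \<longrightarrow> J = J'"
    using finite_has_maximal2 by metis
  have "maximalideal J R"
  proof (rule maximalidealI)
    show "ideal J R" "carrier R \<noteq> J" using J(1) unfolding P_def by auto
    show "J' = J \<or> J' = carrier R" if "ideal J' R" "J \<subseteq> J'" "J' \<subseteq> carrier R" for J'
      using that Jmax ideal.one_imp_carrier unfolding P_def by blast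
  qed
  then show ?thesis using J(2) cgenideal_self[OF z(1)] by blast
qed

lemma (in cring) finite_zero_divisors_eq_Union_max_ideals:
  assumes fin: "finite (carrier R)"
  shows "zero_divisors R = \<Union> (max_ideals R)"
proof
  show "zero_divisors R \<subseteq> \<Union> (max_ideals R)"
  proof
    fix z assume z: "z \<in> zero_divisors R"
    then have "z \<in> carrier R" "z \<notin> Units R"
      using Units_disjoint_zero_divisors unfolding zero_divisors_def by auto
    then show "z \<in> \<Union> (max_ideals R)"
      using finite_nonunit_in_maximalideal[OF fin] unfolding max_ideals_def by blast
  qed
  show "\<Union> (max_ideals R) \<subseteq> zero_divisors R"
  proof
    fix z assume "z \<in> \<Union> (max_ideals R)"
    then obtain m where "maximalideal m R" "z \<in> m" unfolding max_ideals_def by blast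
    then interpret maximalideal m R by simp
    have "z \<notin> Units R" using Units_notin[OF I_notcarr] \<open>z \<in> m\<close> by blast
    then show "z \<in> zero_divisors R"
      using finite_nonunit_zero_divisor[OF fin] Icarr[OF \<open>z \<in> m\<close>] by blast
  qed
qed

lemma (in cring) finite_regular_elems_eq_Units:
  assumes "finite (carrier R)"
  shows "regular_elems R = Units R"
  using Units_disjoint_zero_divisors finite_nonunit_zero_divisor[OF assms] Units_closed
  unfolding regular_elems_def by blast

lemma (in cring) finite_Units_eq_carrier_minus_max_ideals:
  assumes "finite (carrier R)"
  shows "Units R = carrier R - \<Union> (max_ideals R)"
  using finite_regular_elems_eq_Units[OF assms] finite_zero_divisors_eq_Union_max_ideals[OF assms]
  unfolding regular_elems_def by simp

lemma (in ring) maximalideal_sum_eq_carrier: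
  assumes m: "maximalideal m R" and n: "maximalideal n R" and "m \<noteq> n"
  shows "m <+> n = carrier R"
proof -
  interpret m: maximalideal m R by (rule m)
  interpret n: maximalideal n R by (rule n)
  have sum: "ideal (m <+> n) R" "m <+> n \<subseteq> carrier R"
    using add_ideals[OF m.is_ideal n.is_ideal] ideal.Icarr by auto
  have "m \<union> n \<subseteq> m <+> n"
    using genideal_self[of "m \<union> n"] union_genideal[OF m.is_ideal n.is_ideal]
      m.a_subset n.a_subset by blast
  then have "m <+> n = m \<or> m <+> n = carrier R" and "n \<subseteq> m <+> n"
    using m.I_maximal sum by auto
  moreover have "n \<noteq> m" "n \<noteq> carrier R" using assms(3) n.I_notcarr by auto
  ultimately show ?thesis
    using n.I_maximal[OF m.is_ideal] m.a_subset by blast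
qed

lemma (in cring) chinese_remainder_max_ideals:
  assumes "finite M" and "M \<subseteq> max_ideals R" and t: "t \<in> M \<rightarrow> carrier R"
  shows "\<exists>x\<in>carrier R. \<forall>m\<in>M. x \<ominus> t m \<in> m"
proof (cases "M = {}")
  case False
  define n where "n = card M - 1"
  have "card M = Suc n" using assms(1) False unfolding n_def by (simp add: card_gt_0_iff)
  then obtain I where I: "bij_betw I {..<Suc n} M"
    using ex_bij_betw_nat_finite[OF assms(1)] by (metis lessThan_atLeast0)
  have max: "maximalideal (I i) R" if "i \<le> n" for i
    using bij_betw_apply[OF I, of i] that assms(2) unfolding max_ideals_def by auto
  have comax: "I i <+> I j = carrier R" if "i \<le> n" "j \<le> n" "i \<noteq> j" for i j
    using maximalideal_sum_eq_carrier[OF max max] bij_betw_imp_inj_on[OF I] that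
    by (metis inj_on_contraD lessThan_iff le_imp_less_Suc)
  define target where "target = map (\<lambda>i. I i +> t (I i)) [0..< Suc n]"
  have "target \<in> carrier (RDirProd_list (map (\<lambda>i. R Quot (I i)) [0..< Suc n]))"
    unfolding target_def
  proof (rule RDirProd_list_carrier_memI)
    fix i assume "i < length (map (\<lambda>i. R Quot I i) [0..<Suc n])"
    then have "i \<le> n" by simp
    then have "t (I i) \<in> carrier R" using t bij_betw_apply[OF I] by auto
    then show "map (\<lambda>i. I i +> t (I i)) [0..<Suc n] ! i \<in> carrier (map (\<lambda>i. R Quot I i) [0..<Suc n] ! i)"
      using \<open>i \<le> n\<close> by (auto simp del: upt_Suc simp: FactRing_def A_RCOSETS_def')
  qed simp
  then obtain x where x: "x \<in> carrier R" "canonical_proj_ext I n x = target"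
    using canonical_proj_ext_is_surj[of n I] max comax maximalideal.axioms(1) by (metis imageE)
  have "x \<ominus> t m \<in> m" if m: "m \<in> M" for m
  proof -
    obtain i where i: "i \<le> n" "m = I i"
      using I m unfolding bij_betw_def by (auto simp: less_Suc_eq_le)
    have "\<forall>j\<in>set [0..< Suc n]. I j +> x = I j +> t (I j)"
      using x(2) unfolding canonical_proj_ext_def target_def map_eq_conv .
    then have "I i +> x = I i +> t (I i)" using i(1) by (simp del: upt_Suc)
    moreover have "t (I i) \<in> carrier R" using t m i(2) by auto
    ultimately show ?thesis
      using quotient_eq_iff_same_a_r_cos[OF maximalideal.axioms(1)[OF max[OF i(1)]] x(1)] i(2)
      by simp
  qed
  then show ?thesis using x(1) by blast
qed (auto intro: one_closed)

lemma (in cring) finite_max_ideals: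
  assumes "finite (carrier R)"
  shows "finite (max_ideals R)"
  using assms by (rule rev_finite_subset[OF finite_Pow_iff[THEN iffD2]])
    (auto simp: max_ideals_def dest: maximalideal.axioms(1) ideal.Icarr)

lemma (in cring) finite_total_adj_iff:
  assumes "finite (carrier R)" and "x \<in> carrier R" "y \<in> carrier R"
  shows "total_adj R x y \<longleftrightarrow> x \<noteq> y \<and> (\<exists>m\<in>max_ideals R. x \<oplus> y \<in> m)"
  using finite_zero_divisors_eq_Union_max_ideals[OF assms(1)] unfolding total_adj_def by blast

lemma (in cring) finite_ex_sign_modulo_maximalideal:
  assumes fin: "finite (carrier R)" and m: "maximalideal m R" and two: "\<one> \<oplus> \<one> \<notin> m"
  shows "\<exists>s::'a \<Rightarrow> bool. \<forall>x\<in>carrier R. \<forall>y\<in>carrier R. x \<notin> m \<longrightarrow> x \<oplus> y \<in> m \<longrightarrow> s x \<noteq> s y"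
proof -
  interpret maximalideal m R by (rule m)
  have cos_eq: "m +> a = m +> b \<longleftrightarrow> a \<ominus> b \<in> m" if "a \<in> carrier R" "b \<in> carrier R" for a b
    using quotient_eq_iff_same_a_r_cos[OF is_ideal that] by simp
  obtain h :: "'a set \<Rightarrow> nat" where h: "inj_on h (Pow (carrier R))"
    using finite_imp_inj_to_nat_seg fin by (metis finite_Pow_iff)
  define s where "s x = (h (m +> x) < h (m +> \<ominus> x))" for x
  have "s x \<noteq> s y" if x: "x \<in> carrier R" "x \<notin> m" and y: "y \<in> carrier R" and xy: "x \<oplus> y \<in> m" for x y
  proof -
    have y_cos: "m +> y = m +> \<ominus> x"
      using cos_eq xy x y by (simp add: minus_eq a_comm)
    have neg_y_cos: "m +> \<ominus> y = m +> x"
    proof -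
      have "\<ominus> y \<ominus> x = \<ominus> (x \<oplus> y)" using x y by algebra
      then show ?thesis using cos_eq xy x y a_inv_closed by simp
    qed
    have "m +> x \<noteq> m +> \<ominus> x"
    proof
      assume "m +> x = m +> \<ominus> x"
      moreover have "x \<ominus> \<ominus> x = (\<one> \<oplus> \<one>) \<otimes> x" using x by algebra
      ultimately have "(\<one> \<oplus> \<one>) \<otimes> x \<in> m" using cos_eq x by simp
      then show False
        using primeideal.I_prime[OF maximalideal_prime[OF m], of "\<one> \<oplus> \<one>" x] two x by simp
    qed
    moreover have "m +> x \<in> Pow (carrier R)" "m +> \<ominus> x \<in> Pow (carrier R)"
      using a_r_coset_subset_G[OF a_subset] x by auto
    ultimately have "h (m +> x) \<noteq> h (m +> \<ominus> x)"
      using inj_on_eq_iff[OF h] by metis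
    then show ?thesis unfolding s_def y_cos neg_y_cos by auto
  qed
  then show ?thesis by blast
qed

lemma (in ideal) sum_in_if_congruent_one_neg_one:
  assumes "a \<in> carrier R" "b \<in> carrier R" "a \<ominus> \<one> \<in> I" "b \<ominus> \<ominus> \<one> \<in> I" and "\<one> \<oplus> \<one> \<notin> I"
  shows "a \<oplus> b \<in> I" and "a \<noteq> b"
proof -
  have "a \<oplus> b = (a \<ominus> \<one>) \<oplus> (b \<ominus> \<ominus> \<one>)" using assms(1,2) by algebra
  then show "a \<oplus> b \<in> I" using assms(3,4) a_closed by simp
  show "a \<noteq> b"
  proof
    assume "a = b"
    then have "\<one> \<oplus> \<one> = (b \<ominus> \<ominus> \<one>) \<oplus> \<ominus> (a \<ominus> \<one>)" using assms(1) by algebra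
    then show False using assms(3-5) a_closed a_inv_closed by simp
  qed
qed

lemma (in cring) finite_total_adj_if_congruent_one_neg_one:
  assumes fin: "finite (carrier R)" and m: "m \<in> max_ideals R" "\<one> \<oplus> \<one> \<notin> m"
    and ab: "a \<in> carrier R" "b \<in> carrier R" "a \<ominus> \<one> \<in> m" "b \<ominus> \<ominus> \<one> \<in> m"
  shows "total_adj R a b" and "total_adj R b a"
proof -
  interpret maximalideal m R using m(1) by (simp add: max_ideals_def)
  have "a \<oplus> b \<in> m" "b \<oplus> a \<in> m" "a \<noteq> b"
    using sum_in_if_congruent_one_neg_one[OF ab m(2)] a_comm[OF ab(1,2)] by simp_all
  then show "total_adj R a b" "total_adj R b a"
    using finite_total_adj_iff[OF fin] ab(1,2) m(1) by blast+
qed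

lemma card_clique_le_colours:
  assumes "is_clique V E C" and "proper_colouring V E k f"
  shows "card C \<le> k"
proof -
  have "inj_on f C" "f ` C \<subseteq> {..<k}"
    using assms unfolding is_clique_def proper_colouring_def inj_on_def by blast+
  then show ?thesis using card_inj_on_le[of f C "{..<k}"] by simp
qed

lemma chromatic_number_eq_clique_number:
  assumes "finite V" and "proper_colouring V E k f" and "is_clique V E C" and "card C = k"
  shows "chromatic_number V E = k \<and> clique_number V E = k"
proof
  show "chromatic_number V E = k"
    unfolding chromatic_number_def
  proof (rule Least_equality)
    show "\<exists>f. proper_colouring V E k f" using assms(2) by blast
    show "k \<le> k'" if "\<exists>f. proper_colouring V E k' f" for k'
      using that card_clique_le_colours[OF assms(3)] assms(4) by blast
  qed
  show "clique_number V E = k"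
    unfolding clique_number_def
  proof (rule Max_eqI)
    have "{card C |C. is_clique V E C \<and> finite C} \<subseteq> card ` Pow V"
      unfolding is_clique_def by auto
    then show "finite {card C |C. is_clique V E C \<and> finite C}"
      using assms(1) by (simp add: finite_subset)
    show "c \<le> k" if "c \<in> {card C |C. is_clique V E C \<and> finite C}" for c
      using that card_clique_le_colours assms(2) by blast
    have "finite C" using assms(1,3) unfolding is_clique_def by (auto intro: finite_subset)
    then show "k \<in> {card C |C. is_clique V E C \<and> finite C}" using assms(3,4) by blast
  qed
qed

lemma (in cring) finite_Units_total_adj_colouring:
  assumes fin: "finite (carrier R)" and two: "\<forall>m\<in>max_ideals R. \<one> \<oplus> \<one> \<notin> m"
  shows "\<exists>f. proper_colouring (Units R) (total_adj R) (2 ^ card (max_ideals R)) f"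
proof -
  define M where "M = max_ideals R"
  define F where "F = M \<rightarrow>\<^sub>E (UNIV :: bool set)"
  have "\<forall>m\<in>M. \<exists>s::'a \<Rightarrow> bool. \<forall>x\<in>carrier R. \<forall>y\<in>carrier R. x \<notin> m \<longrightarrow> x \<oplus> y \<in> m \<longrightarrow> s x \<noteq> s y"
  proof
    fix m assume "m \<in> M"
    then show "\<exists>s::'a \<Rightarrow> bool. \<forall>x\<in>carrier R. \<forall>y\<in>carrier R. x \<notin> m \<longrightarrow> x \<oplus> y \<in> m \<longrightarrow> s x \<noteq> s y"
      using finite_ex_sign_modulo_maximalideal[OF fin] two unfolding M_def max_ideals_def by simp
  qed
  from bchoice[OF this] obtain S :: "'a set \<Rightarrow> 'a \<Rightarrow> bool" where
    S: "\<forall>m\<in>M. \<forall>x\<in>carrier R. \<forall>y\<in>carrier R. x \<notin> m \<longrightarrow> x \<oplus> y \<in> m \<longrightarrow> S m x \<noteq> S m y"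
    ..
  have "finite F" "card F = 2 ^ card M"
    using finite_max_ideals[OF fin] unfolding F_def M_def by (auto intro: finite_PiE simp: card_PiE)
  then obtain g :: "_ \<Rightarrow> nat" where g: "bij_betw g F {..<2 ^ card M}"
    using ex_bij_betw_finite_nat by (metis atLeast0LessThan)
  have sign_vector: "(\<lambda>m\<in>M. S m x) \<in> F" for x unfolding F_def by simp
  have "proper_colouring (Units R) (total_adj R) (2 ^ card M) (\<lambda>x. g (\<lambda>m\<in>M. S m x))"
    unfolding proper_colouring_def
  proof (intro conjI ballI impI)
    show "(\<lambda>x. g (\<lambda>m\<in>M. S m x)) ` Units R \<subseteq> {..<2 ^ card M}"
      using bij_betw_apply[OF g sign_vector] by blast
    fix x y assume x: "x \<in> Units R" and y: "y \<in> Units R" and "x \<noteq> y \<and> total_adj R x y"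
    have carr: "x \<in> carrier R" "y \<in> carrier R" using x y by (simp_all add: Units_closed)
    have "\<exists>m\<in>M. x \<oplus> y \<in> m"
      using finite_total_adj_iff[OF fin carr] \<open>x \<noteq> y \<and> total_adj R x y\<close> unfolding M_def by simp
    then obtain m where m: "m \<in> M" "x \<oplus> y \<in> m" ..
    have "maximalideal m R" using m(1) unfolding M_def max_ideals_def by simp
    then have "x \<notin> m"
      using ideal.Units_notin[OF maximalideal.axioms(1) maximalideal.I_notcarr x] by simp
    then have "S m x \<noteq> S m y" using S m carr by blast
    then have "(\<lambda>m\<in>M. S m x) \<noteq> (\<lambda>m\<in>M. S m y)" using m(1) by (metis restrict_apply')
    then show "g (\<lambda>m\<in>M. S m x) \<noteq> g (\<lambda>m\<in>M. S m y)"
      using bij_betw_imp_inj_on[OF g] sign_vector by (metis inj_on_eq_iff)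
  qed
  then show ?thesis unfolding M_def by blast
qed

lemma (in cring) finite_Units_total_adj_clique:
  assumes fin: "finite (carrier R)" and two: "\<forall>m\<in>max_ideals R. \<one> \<oplus> \<one> \<notin> m"
  shows "\<exists>C. is_clique (Units R) (total_adj R) C \<and> card C = 2 ^ card (max_ideals R)"
proof -
  define M where "M = max_ideals R"
  define F where "F = M \<rightarrow>\<^sub>E (UNIV :: bool set)"
  define t where "t \<epsilon> m = (if \<epsilon> m then \<one> else \<ominus> \<one>)" for \<epsilon> :: "'a set \<Rightarrow> bool" and m
  have t_Units: "t \<epsilon> m \<in> Units R" for \<epsilon> m unfolding t_def by auto
  have finM: "finite M" using finite_max_ideals[OF fin] unfolding M_def .
  have max: "maximalideal m R" if "m \<in> M" for m using that unfolding M_def max_ideals_def by simp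
  have "\<forall>\<epsilon>\<in>F. \<exists>x. x \<in> carrier R \<and> (\<forall>m\<in>M. x \<ominus> t \<epsilon> m \<in> m)"
    using chinese_remainder_max_ideals[OF finM] t_Units unfolding M_def by blast
  from bchoice[OF this] obtain rep where rep: "\<And>\<epsilon>. \<epsilon> \<in> F \<Longrightarrow> rep \<epsilon> \<in> carrier R"
    and rep_cong: "\<And>\<epsilon> m. \<lbrakk>\<epsilon> \<in> F; m \<in> M\<rbrakk> \<Longrightarrow> rep \<epsilon> \<ominus> t \<epsilon> m \<in> m"
    by blast
  have rep_Units: "rep \<epsilon> \<in> Units R" if \<epsilon>: "\<epsilon> \<in> F" for \<epsilon>
  proof -
    have "rep \<epsilon> \<notin> m" if m: "m \<in> M" for m
      using ideal.congruent_Units_notin[OF maximalideal.axioms(1) maximalideal.I_notcarr,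
          OF max[OF m] max[OF m] rep[OF \<epsilon>] t_Units rep_cong[OF \<epsilon> m]] .
    then show ?thesis
      using rep[OF \<epsilon>] finite_Units_eq_carrier_minus_max_ideals[OF fin] unfolding M_def by blast
  qed
  have clique: "total_adj R (rep \<epsilon>) (rep \<delta>)" if \<epsilon>\<delta>: "\<epsilon> \<in> F" "\<delta> \<in> F" and ne: "\<epsilon> \<noteq> \<delta>" for \<epsilon> \<delta>
  proof -
    obtain m where m: "m \<in> M" "\<epsilon> m \<noteq> \<delta> m"
      using PiE_ext[OF \<epsilon>\<delta>[unfolded F_def]] ne by blast
    then show ?thesis
      using finite_total_adj_if_congruent_one_neg_one[OF fin _ _ rep[OF \<epsilon>\<delta>(1)] rep[OF \<epsilon>\<delta>(2)]]
        finite_total_adj_if_congruent_one_neg_one[OF fin _ _ rep[OF \<epsilon>\<delta>(2)] rep[OF \<epsilon>\<delta>(1)]]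
        rep_cong[OF \<epsilon>\<delta>(1) m(1)] rep_cong[OF \<epsilon>\<delta>(2) m(1)] two
      unfolding t_def M_def by (cases "\<epsilon> m") auto
  qed
  then have "inj_on rep F" unfolding inj_on_def total_adj_def by blast
  moreover have "card F = 2 ^ card M" using finM unfolding F_def by (simp add: card_PiE)
  ultimately have "card (rep ` F) = 2 ^ card M" by (simp add: card_image)
  moreover have "is_clique (Units R) (total_adj R) (rep ` F)"
    unfolding is_clique_def using rep_Units clique by blast
  ultimately show ?thesis unfolding M_def by blast
qed

theorem corollary16:
  fixes R :: "('a, 'b) ring_scheme"
  assumes "cring R"
    and "finite (carrier R)"
    and "\<forall>m \<in> max_ideals R. odd (ring_char (R Quot m))"
  shows "chromatic_number (regular_elems R) (total_adj R)
           = clique_number (regular_elems R) (total_adj R)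
       \<and> clique_number (regular_elems R) (total_adj R) = 2 ^ card (max_ideals R)"
proof -
  interpret cring R by (rule assms(1))
  have two: "\<forall>m\<in>max_ideals R. \<one>\<^bsub>R\<^esub> \<oplus>\<^bsub>R\<^esub> \<one>\<^bsub>R\<^esub> \<notin> m"
  proof
    fix m assume m: "m \<in> max_ideals R"
    then interpret maximalideal m R by (simp add: max_ideals_def)
    show "\<one>\<^bsub>R\<^esub> \<oplus>\<^bsub>R\<^esub> \<one>\<^bsub>R\<^esub> \<notin> m"
      using ring_char_Quot_eq_two[OF I_notcarr] assms(3) m by force
  qed
  obtain f where f: "proper_colouring (Units R) (total_adj R) (2 ^ card (max_ideals R)) f"
    using finite_Units_total_adj_colouring[OF assms(2) two] by blast
  obtain C where C: "is_clique (Units R) (total_adj R) C" "card C = 2 ^ card (max_ideals R)"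
    using finite_Units_total_adj_clique[OF assms(2) two] by blast
  have "finite (Units R)"
    using assms(2) Units_closed by (blast intro: finite_subset)
  then show ?thesis
    using chromatic_number_eq_clique_number[OF _ f C] finite_regular_elems_eq_Units[OF assms(2)]
    by simp
qed

end
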